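(* Let $t$ be a rooted tree with vertex set $I$, and let $\mu(\widehat{0},t)$ be the Möbius number of the interval $[\widehat{0},t]$ in $\Pi_{\operatorname{NAP}}(I)$. If $t$ is a corolla with $n+1$ vertices (a root joined directly to $n$ leaves, $n\geq0$), then $\mu(\widehat{0},t)=(-1)^n$; otherwise $\mu(\widehat{0},t)=0$.
   Context: $\Pi_{\operatorname{NAP}}(I)$ is the set of forests of rooted trees whose vertex set is exactly $I$, partially ordered as follows: $y$ covers $x$ iff $y$ is obtained from $x$ by adding an edge from the root of one component of $x$ to the root of another component (the latter root remaining the root); $\leq$ is the reflexive–transitive closure; $\widehat{0}$ is the forest of one-vertex trees. The Möbius number of an interval $[a,b]$ is $\mu(a,b)$ for the Möbius function of the poset. *)

theory Defs
  imports Main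
begin

text \<open>A forest of rooted trees on a vertex set I is encoded by its set of
  parent edges: (p, c) \<in> E means p is the parent of c.\<close>

definition is_rooted_forest :: "'a set \<Rightarrow> ('a \<times> 'a) set \<Rightarrow> bool" where
  "is_rooted_forest I E \<longleftrightarrow>
     finite I \<and> E \<subseteq> I \<times> I \<and>
     (\<forall>c p q. (p, c) \<in> E \<and> (q, c) \<in> E \<longrightarrow> p = q) \<and>
     acyclic E"

definition is_root :: "'a set \<Rightarrow> ('a \<times> 'a) set \<Rightarrow> 'a \<Rightarrow> bool" where
  "is_root I E v \<longleftrightarrow> v \<in> I \<and> (\<forall>p. (p, v) \<notin> E)"

definition is_rooted_tree :: "'a set \<Rightarrow> ('a \<times> 'a) set \<Rightarrow> bool" where
  "is_rooted_tree I E \<longleftrightarrow> is_rooted_forest I E \<and> (\<exists>!r. is_root I E r)"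

definition nap_cover :: "'a set \<Rightarrow> ('a \<times> 'a) set \<Rightarrow> ('a \<times> 'a) set \<Rightarrow> bool" where
  "nap_cover I x y \<longleftrightarrow> is_rooted_forest I x \<and> is_rooted_forest I y \<and>
     (\<exists>r s. is_root I x r \<and> is_root I x s \<and> r \<noteq> s \<and> y = insert (r, s) x)"

definition nap_le :: "'a set \<Rightarrow> ('a \<times> 'a) set \<Rightarrow> ('a \<times> 'a) set \<Rightarrow> bool" where
  "nap_le I = (nap_cover I)\<^sup>*\<^sup>*"

text \<open>The recursion is implemented with fuel; the fuel
  card [a,b] is always sufficient in a poset with finite intervals.\<close>

fun mobius_aux :: "('b \<Rightarrow> 'b \<Rightarrow> bool) \<Rightarrow> nat \<Rightarrow> 'b \<Rightarrow> 'b \<Rightarrow> int" where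
  "mobius_aux le 0 a b = (if a = b then 1 else 0)"
| "mobius_aux le (Suc n) a b =
     (if a = b then 1
      else if le a b then - (\<Sum>c\<in>{c. le a c \<and> le c b \<and> c \<noteq> b}. mobius_aux le n a c)
      else 0)"

definition mobius :: "('b \<Rightarrow> 'b \<Rightarrow> bool) \<Rightarrow> 'b \<Rightarrow> 'b \<Rightarrow> int" where
  "mobius le a b = mobius_aux le (card {c. le a c \<and> le c b}) a b"

definition is_corolla :: "'a set \<Rightarrow> ('a \<times> 'a) set \<Rightarrow> bool" where
  "is_corolla I E \<longleftrightarrow> (\<exists>r\<in>I. E = {(r, v) | v. v \<in> I \<and> v \<noteq> r})"

end

theory Submission
  imports Defs
begin

text \<open>The interval below a forest S consists of the subforests c of S in which every vertex
  that is a child in c keeps all its children from S: such a c is built from the one-vertex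
  forest by repeatedly attaching an edge of S whose child already carries its full subtree
  in S.
  The Moebius function from the bottom is characterised by the vanishing of its sums over
  intervals, so it suffices to verify this for the candidate value (-1)^|c| on forests c of
  height at most one and 0 otherwise. A closed subforest of S of height at most one uses only
  edges of S ending in leaves, and every set of such edges is closed, so the sum over the
  interval below a nonempty S is the alternating sum over the subsets of the nonempty set of
  leaf edges of S, which vanishes.\<close>

lemma sum_Pow_alternating_sign:
  assumes "finite A" "A \<noteq> {}"
  shows "(\<Sum>X\<in>Pow A. (-1::int) ^ card X) = 0"
proof -
  have "(\<Prod>x\<in>A. (1::int) - 1) = (\<Sum>X\<in>Pow A. (-1) ^ card X * (\<Prod>x\<in>X. 1) * (\<Prod>x\<in>A-X. 1))"
    by (rule prod_diff_conv_sum[OF assms(1)])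
  moreover have "(\<Prod>x\<in>A. (1::int) - 1) = 0"
    using assms by (simp add: card_gt_0_iff)
  ultimately show ?thesis by simp
qed

text \<open>Stated for every fuel n that covers the interval, so that the induction on n never
  has to compare the different fuels used by mobius at b and at the elements below b.\<close>

lemma mobius_aux_eqI:
  assumes "reflp le" "transp le" "antisymp le"
    and fin: "\<And>b. le a b \<Longrightarrow> a \<noteq> b \<Longrightarrow> finite {c. le a c \<and> le c b}"
    and f_a: "f a = 1"
    and sum_zero: "\<And>b. le a b \<Longrightarrow> a \<noteq> b \<Longrightarrow> (\<Sum>c | le a c \<and> le c b. f c) = 0"
  shows "le a b \<Longrightarrow> card {c. le a c \<and> le c b} \<le> n \<Longrightarrow> mobius_aux le n a b = f b"
proof (induction n arbitrary: b)
  case 0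
  show ?case
  proof (cases "a = b")
    case False
    then have "finite {c. le a c \<and> le c b}" "a \<in> {c. le a c \<and> le c b}"
      using fin 0 \<open>reflp le\<close> by (auto dest: reflpD)
    then show ?thesis using 0 by (simp add: card_gt_0_iff)
  qed (use f_a in auto)
next
  case (Suc n)
  show ?case
  proof (cases "a = b")
    case False
    define J where "J = {c. le a c \<and> le c b}"
    have J: "finite J" "b \<in> J"
      using fin Suc.prems False \<open>reflp le\<close> unfolding J_def by (auto dest: reflpD)
    have IH: "mobius_aux le n a c = f c" if c: "c \<in> J - {b}" for c
    proof -
      have "{d. le a d \<and> le d c} \<subseteq> J - {b}"
        using c \<open>transp le\<close> \<open>antisymp le\<close> unfolding J_def
        by (auto dest: transpD antisympD)
      then have "card {d. le a d \<and> le d c} \<le> card J - 1"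
        using J card_mono[of "J - {b}"] by fastforce
      then show ?thesis
        using Suc J c unfolding J_def by auto
    qed
    have "mobius_aux le (Suc n) a b = - (\<Sum>c\<in>J - {b}. mobius_aux le n a c)"
      using False Suc.prems(1) unfolding J_def by (simp add: set_diff_eq)
    also have "\<dots> = - (\<Sum>c\<in>J - {b}. f c)"
      using IH by simp
    also have "\<dots> = f b"
      using sum.remove[OF J, of f] sum_zero[OF Suc.prems(1) False] unfolding J_def by simp
    finally show ?thesis .
  qed (use f_a in auto)
qed

lemma mobius_eqI:
  assumes "reflp le" "transp le" "antisymp le"
    and "\<And>b. le a b \<Longrightarrow> a \<noteq> b \<Longrightarrow> finite {c. le a c \<and> le c b}"
    and "f a = 1"
    and "\<And>b. le a b \<Longrightarrow> a \<noteq> b \<Longrightarrow> (\<Sum>c | le a c \<and> le c b. f c) = 0"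
    and "le a b"
  shows "mobius le a b = f b"
  unfolding mobius_def using mobius_aux_eqI[OF assms(1-6)] assms(7) by simp

text \<open>These are exactly the elements below S in the NAP order (nap_interval_bottom).\<close>

definition closed_subforest :: "('a \<times> 'a) set \<Rightarrow> ('a \<times> 'a) set \<Rightarrow> bool" where
  "closed_subforest S c \<longleftrightarrow> c \<subseteq> S \<and> (\<forall>p r s. (p, r) \<in> c \<longrightarrow> (r, s) \<in> S \<longrightarrow> (r, s) \<in> c)"

lemma is_rooted_forest_subset:
  "is_rooted_forest I y \<Longrightarrow> x \<subseteq> y \<Longrightarrow> is_rooted_forest I x"
  unfolding is_rooted_forest_def using acyclic_subset by blast

lemma finite_rooted_forest: "is_rooted_forest I S \<Longrightarrow> finite S"
  unfolding is_rooted_forest_def by (meson finite_SigmaI finite_subset)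

lemma nap_le_imp_closed_subforest:
  assumes "nap_le I x y"
  shows "closed_subforest y x"
  using assms unfolding nap_le_def
proof (induction rule: rtranclp_induct)
  case (step y z)
  from step.hyps(2) obtain r s where r: "is_root I y r" and z: "z = insert (r, s) y"
    unfolding nap_cover_def by blast
  \<comment> \<open>the only new edge leaves the root r, which has no parent in y \<supseteq> x\<close>
  with step.IH show ?case
    unfolding closed_subforest_def is_root_def by blast
qed (simp add: closed_subforest_def)

lemma acyclic_edge_without_successor:
  assumes "finite E" "acyclic E" "D \<noteq> {}"
  shows "\<exists>(r, s)\<in>D. \<forall>s'. (s, s') \<in> E \<longrightarrow> (s, s') \<notin> D"
proof -
  have "wf (E\<inverse>)"
    using assms by (simp add: finite_acyclic_wf_converse)
  moreover obtain s0 where "s0 \<in> snd ` D"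
    using assms(3) by blast
  ultimately obtain s where "s \<in> snd ` D" and "\<And>s'. (s', s) \<in> E\<inverse> \<Longrightarrow> s' \<notin> snd ` D"
    unfolding wf_eq_minimal by metis
  then show ?thesis by force
qed

lemma closed_subforest_imp_nap_le:
  assumes y: "is_rooted_forest I y"
  shows "closed_subforest y x \<Longrightarrow> nap_le I x y"
proof (induction "card (y - x)" arbitrary: x rule: less_induct)
  case less
  show ?case
  proof (cases "x = y")
    case True
    then show ?thesis unfolding nap_le_def by simp
  next
    case False
    have xy: "x \<subseteq> y" and closed: "\<And>p r s. (p, r) \<in> x \<Longrightarrow> (r, s) \<in> y \<Longrightarrow> (r, s) \<in> x"
      using less.prems unfolding closed_subforest_def by blast+
    have fin: "finite y"
      using y by (rule finite_rooted_forest)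
    have acyc: "acyclic y" and yI: "y \<subseteq> I \<times> I"
      and parent: "\<And>c p q. (p, c) \<in> y \<Longrightarrow> (q, c) \<in> y \<Longrightarrow> p = q"
      using y unfolding is_rooted_forest_def by blast+
    obtain r s where rs: "(r, s) \<in> y - x" and children: "\<And>s'. (s, s') \<in> y \<Longrightarrow> (s, s') \<in> x"
      using acyclic_edge_without_successor[OF fin acyc, of "y - x"] False xy by blast
    define x' where "x' = insert (r, s) x"
    have "is_root I x r"
      using rs closed yI unfolding is_root_def by blast
    moreover have "is_root I x s"
      using rs parent xy yI unfolding is_root_def by blast
    moreover have "r \<noteq> s"
      using acyc rs unfolding acyclic_def by blast
    moreover have "is_rooted_forest I x" "is_rooted_forest I x'"
      using xy rs is_rooted_forest_subset[OF y] unfolding x'_def by simp_all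
    ultimately have "nap_cover I x x'"
      unfolding nap_cover_def x'_def by blast
    moreover have "closed_subforest y x'"
      using xy rs closed children unfolding closed_subforest_def x'_def by blast
    moreover have "y - x' = (y - x) - {(r, s)}"
      unfolding x'_def by blast
    then have "card (y - x') < card (y - x)"
      using card_Diff1_less[of "y - x" "(r, s)"] rs fin by simp
    ultimately show ?thesis
      using less.hyps unfolding nap_le_def by (meson converse_rtranclp_into_rtranclp)
  qed
qed

lemma nap_interval_bottom:
  assumes "is_rooted_forest I S"
  shows "{c. nap_le I {} c \<and> nap_le I c S} = {c. closed_subforest S c}"
proof (intro set_eqI iffI)
  fix c
  assume "c \<in> {c. nap_le I {} c \<and> nap_le I c S}"
  then show "c \<in> {c. closed_subforest S c}"
    using nap_le_imp_closed_subforest[of I c S] by simp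
next
  fix c
  assume "c \<in> {c. closed_subforest S c}"
  then have closed: "closed_subforest S c"
    by simp
  then have "is_rooted_forest I c"
    using is_rooted_forest_subset[OF assms] unfolding closed_subforest_def by simp
  then have "nap_le I {} c"
    by (rule closed_subforest_imp_nap_le) (simp add: closed_subforest_def)
  moreover have "nap_le I c S"
    using assms closed by (rule closed_subforest_imp_nap_le)
  ultimately show "c \<in> {c. nap_le I {} c \<and> nap_le I c S}"
    by simp
qed

lemma nap_le_partial_order: "reflp (nap_le I)" "transp (nap_le I)" "antisymp (nap_le I)"
  unfolding nap_le_def
  by (simp_all add: reflp_def antisymp_def)
    (metis closed_subforest_def nap_le_def nap_le_imp_closed_subforest subset_antisym)

lemma nap_le_imp_rooted_forest: "nap_le I x y \<Longrightarrow> x \<noteq> y \<Longrightarrow> is_rooted_forest I y"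
  unfolding nap_le_def nap_cover_def by (induction rule: rtranclp_induct) auto

definition leaf_edges :: "('a \<times> 'a) set \<Rightarrow> ('a \<times> 'a) set" where
  "leaf_edges S = {(p, s) \<in> S. s \<notin> Domain S}"

text \<open>c O c = {} says that c has height at most one, i.e. each of its trees is a corolla.\<close>

definition flat_sign :: "('a \<times> 'a) set \<Rightarrow> int" where
  "flat_sign c = (if c O c = {} then (-1) ^ card c else 0)"

lemma closed_subforest_flat_iff:
  "closed_subforest S c \<Longrightarrow> c O c = {} \<longleftrightarrow> c \<subseteq> leaf_edges S"
  unfolding closed_subforest_def leaf_edges_def by blast

lemma sum_closed_subforests_flat_sign:
  assumes "finite S" "acyclic S" "S \<noteq> {}"
  shows "(\<Sum>c | closed_subforest S c. flat_sign c) = 0"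
proof -
  have "finite {c. closed_subforest S c}"
    using assms(1) by (rule finite_subset[rotated, OF finite_Pow_iff[THEN iffD2]])
      (auto simp: closed_subforest_def)
  moreover have "Pow (leaf_edges S) \<subseteq> {c. closed_subforest S c}"
    unfolding closed_subforest_def leaf_edges_def by blast
  moreover have "flat_sign c = 0" if "c \<in> {c. closed_subforest S c} - Pow (leaf_edges S)" for c
    using that closed_subforest_flat_iff unfolding flat_sign_def by auto
  ultimately have "(\<Sum>c | closed_subforest S c. flat_sign c) = (\<Sum>c\<in>Pow (leaf_edges S). flat_sign c)"
    by (intro sum.mono_neutral_right) auto
  also have "\<dots> = (\<Sum>c\<in>Pow (leaf_edges S). (-1) ^ card c)"
    by (intro sum.cong) (auto simp: flat_sign_def leaf_edges_def)
  also have "\<dots> = 0"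
  proof (rule sum_Pow_alternating_sign)
    show "finite (leaf_edges S)"
      using assms(1) unfolding leaf_edges_def by (auto intro: finite_subset)
    show "leaf_edges S \<noteq> {}"
      using acyclic_edge_without_successor[OF assms(1,2,3)] unfolding leaf_edges_def by blast
  qed
  finally show ?thesis .
qed

lemma mobius_nap_bottom:
  assumes "is_rooted_forest I S"
  shows "mobius (nap_le I) {} S = flat_sign S"
proof (rule mobius_eqI[OF nap_le_partial_order])
  fix b
  assume b: "nap_le I {} b" "{} \<noteq> b"
  then have forest: "is_rooted_forest I b"
    by (rule nap_le_imp_rooted_forest)
  then have "finite b" "acyclic b"
    using finite_rooted_forest unfolding is_rooted_forest_def by blast+
  have "{c. closed_subforest b c} \<subseteq> Pow b"
    unfolding closed_subforest_def by blast
  then show "finite {c. nap_le I {} c \<and> nap_le I c b}"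
    unfolding nap_interval_bottom[OF forest] using \<open>finite b\<close> finite_subset by blast
  show "(\<Sum>c | nap_le I {} c \<and> nap_le I c b. flat_sign c) = 0"
    unfolding nap_interval_bottom[OF forest]
    using \<open>finite b\<close> \<open>acyclic b\<close> b(2) by (simp add: sum_closed_subforests_flat_sign)
next
  show "flat_sign {} = 1"
    by (simp add: flat_sign_def)
next
  show "nap_le I {} S"
    by (rule closed_subforest_imp_nap_le[OF assms]) (simp add: closed_subforest_def)
qed

lemma rooted_tree_flat_iff_corolla:
  assumes "is_rooted_tree I t"
  shows "t O t = {} \<longleftrightarrow> is_corolla I t"
proof
  obtain r where r: "r \<in> I" "\<And>p. (p, r) \<notin> t" and unique: "\<And>v. is_root I t v \<Longrightarrow> v = r"
    using assms unfolding is_rooted_tree_def is_root_def by blast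
  have tI: "t \<subseteq> I \<times> I"
    using assms unfolding is_rooted_tree_def is_rooted_forest_def by blast
  assume flat: "t O t = {}"
  have parent_is_root: "p = r" if pv: "(p, v) \<in> t" for p v
  proof (rule ccontr)
    assume "p \<noteq> r"
    then obtain q where "(q, p) \<in> t"
      using unique tI pv unfolding is_root_def by blast
    then show False
      using flat pv by blast
  qed
  have "t = {(r, v) | v. v \<in> I \<and> v \<noteq> r}"
  proof (intro set_eqI iffI)
    fix e
    assume "e \<in> t"
    then obtain p v where e: "e = (p, v)" "(p, v) \<in> t"
      by (metis surj_pair)
    then have "p = r"
      using parent_is_root by blast
    moreover have "v \<in> I" "v \<noteq> r"
      using e(2) tI r(2) by blast+
    ultimately show "e \<in> {(r, v) | v. v \<in> I \<and> v \<noteq> r}"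
      using e(1) by simp
  next
    fix e
    assume "e \<in> {(r, v) | v. v \<in> I \<and> v \<noteq> r}"
    then obtain v where v: "e = (r, v)" "v \<in> I" "v \<noteq> r"
      by blast
    then obtain p where "(p, v) \<in> t"
      using unique unfolding is_root_def by blast
    then show "e \<in> t"
      using parent_is_root v(1) by blast
  qed
  then show "is_corolla I t"
    unfolding is_corolla_def using r(1) by (rule bexI)
next
  assume "is_corolla I t"
  then obtain r where "t = {(r, v) | v. v \<in> I \<and> v \<noteq> r}"
    unfolding is_corolla_def by blast
  then show "t O t = {}"
    by auto
qed

lemma card_corolla:
  assumes "finite I" "is_corolla I t"
  shows "card t = card I - 1"
proof -
  obtain r where r: "r \<in> I" and t: "t = {(r, v) | v. v \<in> I \<and> v \<noteq> r}"
    using assms(2) unfolding is_corolla_def by blast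
  have "t = Pair r ` (I - {r})"
    unfolding t by blast
  then have "card t = card (I - {r})"
    by (simp add: card_image inj_on_def)
  then show ?thesis
    using r assms(1) by simp
qed

theorem proposition6p13:
  fixes I :: "'a set" and t :: "('a \<times> 'a) set"
  assumes "finite I" and "is_rooted_tree I t"
  shows "mobius (nap_le I) {} t =
           (if is_corolla I t then (-1) ^ (card I - 1) else 0)"
proof -
  have "is_rooted_forest I t"
    using assms(2) unfolding is_rooted_tree_def by blast
  then have "mobius (nap_le I) {} t = flat_sign t"
    by (rule mobius_nap_bottom)
  then show ?thesis
    using rooted_tree_flat_iff_corolla[OF assms(2)] card_corolla[OF assms(1)]
    by (simp add: flat_sign_def)
qed

end
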